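(* Fix $\gamma\in(2/3,1)$. For $N>0$ let $w_N=(N,N)$, $M=N-\sqrt2N^\gamma$, $K=[2\sqrt2N^{1+\gamma}]+1$, $z_j=(jM/K,\,jM/K+\sqrt2N^\gamma)$ for $0\le j\le K$, $\mathcal{C}=\{z_j\}_{j=0}^K$, and let $\mathcal{C}'$ be the image of $\mathcal{C}$ under $T_N(x,y)=(N-x,N-y)$. Then for all sufficiently large $N$ and every $z\in\mathcal{C}\cup\mathcal{C}'$, $$\sqrt{a(0,z)}+\sqrt{a(z,w_N)}-\sqrt{a(0,w_N)}\le -N^{2\gamma-1}.$$
   Context: $a(w,w')$ denotes the area of the axis-parallel rectangle with corners $w$ and $w'$. $[x]$ is the integer part. *)

theory Defs
  imports Complex_Main
begin

definition rect_area :: "real \<times> real \<Rightarrow> real \<times> real \<Rightarrow> real" where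
  "rect_area w w' = \<bar>fst w - fst w'\<bar> * \<bar>snd w - snd w'\<bar>"

definition M_of :: "real \<Rightarrow> real \<Rightarrow> real" where
  "M_of \<gamma> N = N - sqrt 2 * N powr \<gamma>"

definition K_of :: "real \<Rightarrow> real \<Rightarrow> nat" where
  "K_of \<gamma> N = nat \<lfloor>2 * sqrt 2 * N powr (1 + \<gamma>)\<rfloor> + 1"

definition zpt :: "real \<Rightarrow> real \<Rightarrow> nat \<Rightarrow> real \<times> real" where
  "zpt \<gamma> N j = (real j * M_of \<gamma> N / real (K_of \<gamma> N),
                 real j * M_of \<gamma> N / real (K_of \<gamma> N) + sqrt 2 * N powr \<gamma>)"

definition Cset :: "real \<Rightarrow> real \<Rightarrow> (real \<times> real) set" where
  "Cset \<gamma> N = zpt \<gamma> N ` {0..K_of \<gamma> N}"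

definition TN :: "real \<Rightarrow> real \<times> real \<Rightarrow> real \<times> real" where
  "TN N p = (N - fst p, N - snd p)"

definition Cset' :: "real \<Rightarrow> real \<Rightarrow> (real \<times> real) set" where
  "Cset' \<gamma> N = TN N ` Cset \<gamma> N"

end

theory Submission
  imports Defs
begin

text \<open>
  Every point of \<open>\<C> \<union> \<C>'\<close> has the form \<open>(t, t + d)\<close> (or its image under the
  symmetry \<open>T\<^sub>N\<close>, which swaps the two areas) with \<open>d = \<surd>2 N\<^sup>\<gamma>\<close> and
  \<open>0 \<le> t \<le> N - d\<close>. A quantitative AM-GM inequality bounds each square root of an area by
  the arithmetic mean of the sides minus a term of order \<open>d\<^sup>2\<close> divided by the
  perimeter; the two deficits add up to at least \<open>d\<^sup>2/(2N) = N\<^bsup>2\<gamma>-1\<^esup>\<close>.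
\<close>

lemma sqrt_mult_le_mean_minus:
  fixes x y :: real
  assumes "0 \<le> x" "0 \<le> y" "0 < x + y"
  shows "sqrt (x * y) \<le> (x + y) / 2 - (x - y)\<^sup>2 / (4 * (x + y))"
proof (rule real_le_lsqrt)
  define s q where "s = x + y" and "q = (x - y)\<^sup>2"
  have s: "0 < s" using assms by (simp add: s_def)
  have xy: "x * y = (s\<^sup>2 - q) / 4" by (simp add: s_def q_def power2_eq_square algebra_simps)
  have "q \<le> s\<^sup>2" using assms by (simp add: s_def q_def power2_eq_square algebra_simps)
  have mean: "(x + y) / 2 - (x - y)\<^sup>2 / (4 * (x + y)) = (2 * s\<^sup>2 - q) / (4 * s)"
    using s by (simp add: s_def q_def field_simps power2_eq_square)
  have "0 \<le> 2 * s\<^sup>2 - q" using \<open>q \<le> s\<^sup>2\<close> zero_le_power2[of s] by linarith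
  then show "0 \<le> (x + y) / 2 - (x - y)\<^sup>2 / (4 * (x + y))"
    unfolding mean using s by simp
  have "(s\<^sup>2 - q) / 4 \<le> (s\<^sup>2 - q) / 4 + (q / (4 * s))\<^sup>2" by simp
  also have "\<dots> = ((2 * s\<^sup>2 - q) / (4 * s))\<^sup>2"
    using s by (simp add: field_simps power2_eq_square)
  finally show "x * y \<le> ((x + y) / 2 - (x - y)\<^sup>2 / (4 * (x + y)))\<^sup>2"
    unfolding xy mean .
qed

lemma sqrt_rect_area_sum_shifted_diagonal_le:
  fixes t d N :: real
  assumes "0 \<le> t" "0 < d" "t + d \<le> N"
  shows "sqrt (rect_area (0, 0) (t, t + d)) + sqrt (rect_area (t, t + d) (N, N))
           \<le> N - d\<^sup>2 / (2 * N)"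
proof -
  define a b where "a = 2 * t + d" and "b = 2 * N - 2 * t - d"
  have a: "0 < a" and b: "0 < b" using assms by (simp_all add: a_def b_def)
  have area1: "rect_area (0, 0) (t, t + d) = t * (t + d)"
    using assms by (simp add: rect_area_def)
  have area2: "rect_area (t, t + d) (N, N) = (N - t) * (N - (t + d))"
    using assms by (simp add: rect_area_def abs_of_nonpos)
  have "sqrt (t * (t + d)) \<le> a / 2 - d\<^sup>2 / (4 * a)"
    using sqrt_mult_le_mean_minus[of t "t + d"] assms by (simp add: a_def power2_commute)
  moreover have "sqrt ((N - t) * (N - (t + d))) \<le> b / 2 - d\<^sup>2 / (4 * b)"
    using sqrt_mult_le_mean_minus[of "N - t" "N - (t + d)"] assms
    by (simp add: b_def algebra_simps)
  moreover have "d\<^sup>2 / (2 * N) \<le> d\<^sup>2 / (4 * a) + d\<^sup>2 / (4 * b)"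
  proof -
    have "4 * a * b \<le> (a + b)\<^sup>2" using sum_squares_ge_zero[of "a - b" 0]
      by (simp add: power2_eq_square algebra_simps)
    then have "4 / (a + b) \<le> 1 / a + 1 / b"
      using a b by (simp add: field_simps power2_eq_square)
    moreover have "4 / (a + b) = 2 / N"
      unfolding a_def b_def by simp
    ultimately have "2 / N \<le> 1 / a + 1 / b" by simp
    then have "d\<^sup>2 / 4 * (2 / N) \<le> d\<^sup>2 / 4 * (1 / a + 1 / b)"
      by (rule mult_left_mono) simp
    then show ?thesis by (simp add: distrib_left)
  qed
  moreover have "a / 2 + b / 2 = N" by (simp add: a_def b_def field_simps)
  ultimately show ?thesis
    unfolding area1 area2 by linarith
qed

lemma rect_area_TN:
  "rect_area (0, 0) (TN N z) = rect_area z (N, N)"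
  "rect_area (TN N z) (N, N) = rect_area (0, 0) z"
  by (simp_all add: rect_area_def TN_def abs_minus_commute)

lemma zpt_on_shifted_diagonal:
  assumes "0 \<le> M_of \<gamma> N" "j \<le> K_of \<gamma> N"
  obtains t where "zpt \<gamma> N j = (t, t + sqrt 2 * N powr \<gamma>)" "0 \<le> t" "t \<le> M_of \<gamma> N"
proof
  let ?K = "real (K_of \<gamma> N)"
  have K: "0 < ?K" by (simp add: K_of_def add_pos_nonneg)
  show "zpt \<gamma> N j = (real j * M_of \<gamma> N / ?K, real j * M_of \<gamma> N / ?K + sqrt 2 * N powr \<gamma>)"
    by (simp add: zpt_def)
  show "0 \<le> real j * M_of \<gamma> N / ?K" using assms by simp
  have "real j * M_of \<gamma> N / ?K \<le> ?K * M_of \<gamma> N / ?K"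
    using assms by (intro divide_right_mono mult_right_mono) simp_all
  then show "real j * M_of \<gamma> N / ?K \<le> M_of \<gamma> N" using K by simp
qed

lemma eventually_mult_powr_le_self:
  fixes c \<gamma> :: real
  assumes "\<gamma> < 1"
  shows "\<forall>\<^sub>F N in at_top. c * N powr \<gamma> \<le> N"
proof -
  have "((\<lambda>N::real. c * N powr (\<gamma> - 1)) \<longlongrightarrow> 0) at_top"
    using assms by (intro tendsto_mult_right_zero tendsto_neg_powr filterlim_ident) simp
  then have "\<forall>\<^sub>F N in at_top. c * N powr (\<gamma> - 1) < 1"
    by (rule order_tendstoD) simp
  with eventually_gt_at_top[of 0] show ?thesis
  proof eventually_elim
    case (elim N)
    then have "c * N powr \<gamma> = c * N powr (\<gamma> - 1) * N" by (simp add: powr_diff)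
    also have "\<dots> \<le> N" using elim by simp
    finally show ?case .
  qed
qed

theorem lemma3p2:
  fixes \<gamma> :: real
  assumes "2/3 < \<gamma>" and "\<gamma> < 1"
  shows "\<forall>\<^sub>F N in at_top. \<forall>z \<in> Cset \<gamma> N \<union> Cset' \<gamma> N.
           sqrt (rect_area (0,0) z) + sqrt (rect_area z (N,N)) - sqrt (rect_area (0,0) (N,N))
             \<le> - (N powr (2*\<gamma> - 1))"
  using eventually_mult_powr_le_self[OF assms(2), of "sqrt 2"] eventually_gt_at_top[of 0]
proof eventually_elim
  case (elim N)
  define d where "d = sqrt 2 * N powr \<gamma>"
  have d: "0 < d" "0 \<le> M_of \<gamma> N" using elim by (simp_all add: d_def M_of_def)
  have diag: "sqrt (rect_area (0, 0) (N, N)) = N" using elim by (simp add: rect_area_def)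
  have deficit: "d\<^sup>2 / (2 * N) = N powr (2 * \<gamma> - 1)"
  proof -
    have "d\<^sup>2 = 2 * N powr (2 * \<gamma>)"
      using powr_power[of N \<gamma> 2] elim by (simp add: d_def power_mult_distrib mult.commute)
    then show ?thesis using elim by (simp add: powr_diff)
  qed
  have "sqrt (rect_area (0, 0) p) + sqrt (rect_area p (N, N)) - N \<le> - (N powr (2 * \<gamma> - 1))"
    if "p \<in> Cset \<gamma> N" for p
  proof -
    obtain j where j: "j \<le> K_of \<gamma> N" and p: "p = zpt \<gamma> N j"
      using \<open>p \<in> Cset \<gamma> N\<close> unfolding Cset_def by auto
    obtain t where "p = (t, t + d)" "0 \<le> t" "t \<le> M_of \<gamma> N"
      using zpt_on_shifted_diagonal[OF d(2) j] unfolding p d_def .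
    then show ?thesis
      using sqrt_rect_area_sum_shifted_diagonal_le[of t d N] d deficit
      by (simp add: d_def M_of_def)
  qed
  then show ?case
    by (auto simp: Cset'_def rect_area_TN diag add.commute)
qed

end
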